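(* Let $w=w_1\cdots w_n$ be a word of length $n\ge 2$ with $w_i\ne w_{n-i+1}$ for some $i$. Then for every positive integer $d$, $f(w,d)\le \frac14\left((n+2)^d-(n-2)^d\right)$.
   Context: Let $[n]=\{1,\dots,n\}$, $n\ge 2$, $d\ge 1$. For $p\in[n]^d$ and $v\in\{-1,0,1\}^d$ with $v\ne\vec 0$, if $p+tv\in[n]^d$ for all $0\le t\le n-1$, the set $\ell=\{p,p+v,\dots,p+(n-1)v\}$ is called a line (with initial point $p$ and direction $v$). Each line has a unique representation $(p;v)$ in which the first nonzero coordinate of $v$ is $+1$ (its canonical pair); for such a representation write $\ell_i=p+(i-1)v$ for $1\le i\le n$. An $(n,d)$-grid is a function $G:[n]^d\to\Sigma$ for an arbitrary set of letters $\Sigma$. For a word $w=w_1\cdots w_n$, a line $\ell$ contains $w$ if $G(\ell_1)G(\ell_2)\cdots G(\ell_n)=w$ or $G(\ell_n)\cdots G(\ell_1)=w$. $f(w,G)$ is the number of lines of $[n]^d$ containing $w$, and $f(w,d)=\max_G f(w,G)$ over all $(n,d)$-grids $G$. *)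

theory Defs
  imports Complex_Main
begin

definition grid_pts :: "nat \<Rightarrow> nat \<Rightarrow> int list set" where
  "grid_pts n d = {p. length p = d \<and> (\<forall>x\<in>set p. 1 \<le> x \<and> x \<le> int n)}"

definition shift :: "int list \<Rightarrow> int list \<Rightarrow> int \<Rightarrow> int list" where
  "shift p v t = map2 (\<lambda>a b. a + t * b) p v"

definition is_dir :: "nat \<Rightarrow> int list \<Rightarrow> bool" where
  "is_dir d v \<longleftrightarrow> length v = d \<and> (\<forall>x\<in>set v. x \<in> {-1,0,1}) \<and> (\<exists>x\<in>set v. x \<noteq> 0)"

definition canonical_dir :: "int list \<Rightarrow> bool" where
  "canonical_dir v \<longleftrightarrow> hd (dropWhile (\<lambda>x. x = 0) v) = 1"

definition line_pair :: "nat \<Rightarrow> nat \<Rightarrow> int list \<Rightarrow> int list \<Rightarrow> bool" where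
  "line_pair n d p v \<longleftrightarrow> p \<in> grid_pts n d \<and> is_dir d v \<and>
     (\<forall>t::nat. t \<le> n - 1 \<longrightarrow> shift p v (int t) \<in> grid_pts n d)"

definition line_set :: "nat \<Rightarrow> int list \<Rightarrow> int list \<Rightarrow> int list set" where
  "line_set n p v = {shift p v (int t) | t. t \<le> n - 1}"

definition is_line :: "nat \<Rightarrow> nat \<Rightarrow> int list set \<Rightarrow> bool" where
  "is_line n d L \<longleftrightarrow> (\<exists>p v. line_pair n d p v \<and> L = line_set n p v)"

text \<open>Here l_i = p + (i-1)v, i.e. index i-1 in 0-based form.\<close>
definition line_contains ::
    "nat \<Rightarrow> nat \<Rightarrow> (int list \<Rightarrow> 'a) \<Rightarrow> 'a list \<Rightarrow> int list set \<Rightarrow> bool" where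
  "line_contains n d G w L \<longleftrightarrow> (\<exists>p v. line_pair n d p v \<and> canonical_dir v \<and> L = line_set n p v \<and>
     ((\<forall>i<n. G (shift p v (int i)) = w ! i) \<or>
      (\<forall>i<n. G (shift p v (int (n - 1 - i))) = w ! i)))"

definition f_grid :: "'a list \<Rightarrow> nat \<Rightarrow> (int list \<Rightarrow> 'a) \<Rightarrow> nat" where
  "f_grid w d G = card {L. is_line (length w) d L \<and> line_contains (length w) d G w L}"

text \<open>f(w,d) = max over all grids G (letters of the same type as w; values of G outside
  the grid are irrelevant).\<close>
definition f_max :: "'a list \<Rightarrow> nat \<Rightarrow> nat" where
  "f_max w d = Sup {f_grid w d G | G. True}"

end

theory Submission
  imports Defs
begin

(* Fix i with w_i \<noteq> w_(n+1-i) and read a line containing w so that its i-th point x carries w_i;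
   let y be its (n+1-i)-th point. In each coordinate x and y either agree or take the values i and
   n+1-i in some order, and the line is recovered from the ordered pair (x, y). Hence f(w,G) is at
   most the number of pairs (x, y) with G x = w_i and G y = w_(n+1-i) that become equal once the
   value n+1-i is identified with i. A class of this identification with m points contains at most
   m^2/4 such pairs, and none if m = 1. The squares of the class sizes sum to (n+2)^d, and the
   (n-2)^d points avoiding both values form singleton classes, so 4 f(w,G) + (n-2)^d \<le> (n+2)^d. *)

definition identify :: "int \<Rightarrow> int \<Rightarrow> int \<Rightarrow> int" where
  "identify c c' z = (if z = c' then c else z)"

lemma card_list_all2_length:
  assumes "finite {(a, b). R a b}"
  shows "card {(xs, ys). length xs = d \<and> list_all2 R xs ys} = card {(a, b). R a b} ^ d"
proof -
  let ?Z = "{zs. set zs \<subseteq> {(a, b). R a b} \<and> length zs = d}"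
  have "bij_betw (\<lambda>zs. (map fst zs, map snd zs)) ?Z {(xs, ys). length xs = d \<and> list_all2 R xs ys}"
  proof (rule bij_betw_imageI)
    show "inj_on (\<lambda>zs. (map fst zs, map snd zs)) ?Z"
      by (rule inj_onI) (metis prod.inject zip_map_fst_snd)
    show "(\<lambda>zs. (map fst zs, map snd zs)) ` ?Z = {(xs, ys). length xs = d \<and> list_all2 R xs ys}"
    proof (intro equalityI subsetI)
      fix xys assume "xys \<in> (\<lambda>zs. (map fst zs, map snd zs)) ` ?Z"
      then show "xys \<in> {(xs, ys). length xs = d \<and> list_all2 R xs ys}"
        by (auto simp: list_all2_conv_all_nth subset_iff split: prod.splits)
    next
      fix xys assume "xys \<in> {(xs, ys). length xs = d \<and> list_all2 R xs ys}"
      then obtain xs ys where "xys = (xs, ys)" "length xs = d" "list_all2 R xs ys" by auto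
      moreover have "set (zip xs ys) \<subseteq> {(a, b). R a b}"
        using \<open>list_all2 R xs ys\<close> by (auto simp: list_all2_iff)
      ultimately show "xys \<in> (\<lambda>zs. (map fst zs, map snd zs)) ` ?Z"
        by (intro image_eqI[of _ _ "zip xs ys"]) (simp_all add: list_all2_lengthD)
    qed
  qed
  then show ?thesis
    using card_lists_length_eq[OF assms, of d] by (simp add: bij_betw_same_card)
qed

lemma four_mult_le_square_add: "4 * a * b \<le> (a + b :: nat)\<^sup>2"
proof -
  have "int (4 * a * b) \<le> int ((a + b)\<^sup>2)"
    using zero_le_power2[of "int a - int b"] by (simp add: power2_eq_square algebra_simps)
  then show ?thesis by linarith
qed

lemma four_card_mult_le_card_square:
  assumes "finite C" "A \<subseteq> C" "B \<subseteq> C" "A \<inter> B = {}"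
  shows "4 * (card A * card B) \<le> card C * card C"
proof -
  have "card A + card B = card (A \<union> B)"
    using assms by (simp add: card_Un_disjoint finite_subset)
  also have "\<dots> \<le> card C"
    using assms by (intro card_mono) auto
  finally have "(card A + card B)\<^sup>2 \<le> (card C)\<^sup>2"
    by (rule power_mono) simp
  with four_mult_le_square_add[of "card A" "card B"] show ?thesis
    by (simp add: power2_eq_square mult.assoc)
qed

lemma card_eq_sum_card_fibres:
  assumes "finite A" "finite B" "f ` A \<subseteq> B"
  shows "card A = (\<Sum>b\<in>B. card {a \<in> A. f a = b})"
  using sum.group[OF assms, of "\<lambda>_. 1 :: nat"] by simp

lemma card_fibre_pairs_eq_sum:
  assumes "finite X" "C \<subseteq> X" "D \<subseteq> X"
  shows "card {(x, y) \<in> C \<times> D. r x = r y} = (\<Sum>\<rho>\<in>r ` X. card {x \<in> C. r x = \<rho>} * card {y \<in> D. r y = \<rho>})"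
proof -
  have "finite C" "finite D"
    using assms by (auto intro: finite_subset)
  then have "card {(x, y) \<in> C \<times> D. r x = r y}
      = (\<Sum>\<rho>\<in>r ` X. card {xy \<in> {(x, y) \<in> C \<times> D. r x = r y}. r (fst xy) = \<rho>})"
    using assms by (intro card_eq_sum_card_fibres) (auto intro: finite_subset[of _ "C \<times> D"])
  also have "\<dots> = (\<Sum>\<rho>\<in>r ` X. card ({x \<in> C. r x = \<rho>} \<times> {y \<in> D. r y = \<rho>}))"
    by (intro sum.cong refl arg_cong[where f = card]) auto
  finally show ?thesis by (simp add: card_cartesian_product)
qed

lemma four_card_fibre_pairs_le:
  assumes "finite X" "A \<subseteq> X" "B \<subseteq> X" "A \<inter> B = {}"
  shows "4 * card {(x, y) \<in> A \<times> B. r x = r y} + card {x \<in> X. \<forall>y \<in> X. r y = r x \<longrightarrow> y = x}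
    \<le> card {(x, y) \<in> X \<times> X. r x = r y}"
proof -
  define F where "F C \<rho> = {x \<in> C. r x = \<rho>}" for C \<rho>
  define S where "S = {x \<in> X. \<forall>y \<in> X. r y = r x \<longrightarrow> y = x}"
  have fibre: "4 * (card (F A \<rho>) * card (F B \<rho>)) + card (F S \<rho>) \<le> card (F X \<rho>) * card (F X \<rho>)" for \<rho>
  proof (cases "F S \<rho> = {}")
    case True
    have "4 * (card (F A \<rho>) * card (F B \<rho>)) \<le> card (F X \<rho>) * card (F X \<rho>)"
      by (rule four_card_mult_le_card_square) (use assms in \<open>auto simp: F_def\<close>)
    with True show ?thesis by simp
  next
    case False
    then obtain x where "x \<in> S" "r x = \<rho>" by (auto simp: F_def)
    then have "F X \<rho> = {x}" "F S \<rho> = {x}" by (auto simp: F_def S_def)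
    moreover have "F A \<rho> \<subseteq> {x} \<inter> A" "F B \<rho> \<subseteq> {x} \<inter> B"
      using \<open>F X \<rho> = {x}\<close> assms(2,3) by (auto simp: F_def)
    then have "F A \<rho> = {} \<or> F B \<rho> = {}"
      using assms(4) by blast
    ultimately show ?thesis by auto
  qed
  have card_S: "card S = (\<Sum>\<rho>\<in>r ` X. card (F S \<rho>))"
    unfolding F_def using assms(1) by (intro card_eq_sum_card_fibres) (auto simp: S_def)
  have "4 * card {(x, y) \<in> A \<times> B. r x = r y} + card S
      = (\<Sum>\<rho>\<in>r ` X. 4 * (card (F A \<rho>) * card (F B \<rho>)) + card (F S \<rho>))"
    using card_fibre_pairs_eq_sum[OF assms(1-3), of r] card_S by (simp add: F_def sum.distrib sum_distrib_left)
  also have "\<dots> \<le> (\<Sum>\<rho>\<in>r ` X. card (F X \<rho>) * card (F X \<rho>))"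
    by (rule sum_mono) (rule fibre)
  also have "\<dots> = card {(x, y) \<in> X \<times> X. r x = r y}"
    using card_fibre_pairs_eq_sum[OF assms(1), of X X r] by (simp add: F_def)
  finally show ?thesis by (simp add: S_def)
qed

lemma grid_pts_eq: "grid_pts n d = {xs. set xs \<subseteq> {1..int n} \<and> length xs = d}"
  unfolding grid_pts_def by auto

lemma grid_pts_nth: "x \<in> grid_pts n d \<longleftrightarrow> length x = d \<and> (\<forall>i<d. x ! i \<in> {1..int n})"
  unfolding grid_pts_def by (auto simp: all_set_conv_all_nth)

lemma finite_grid_pts: "finite (grid_pts n d)"
  unfolding grid_pts_eq by (rule finite_lists_length_eq) simp

lemma map_eq_map_iff_list_all2: "map f xs = map f ys \<longleftrightarrow> list_all2 (\<lambda>a b. f a = f b) xs ys"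
  by (auto simp: list_all2_conv_all_nth list_eq_iff_nth_eq)

lemma identify_eq_iff:
  "c \<noteq> c' \<Longrightarrow> identify c c' a = identify c c' b \<longleftrightarrow> a = b \<or> (a = c \<and> b = c') \<or> (a = c' \<and> b = c)"
  unfolding identify_def by auto

lemma card_identify_pairs:
  assumes "c \<in> {1..int n}" "c' \<in> {1..int n}" "c \<noteq> c'"
  shows "card {(a, b). a \<in> {1..int n} \<and> b \<in> {1..int n} \<and> identify c c' a = identify c c' b} = n + 2"
proof -
  let ?diag = "(\<lambda>a. (a, a)) ` {1..int n}"
  have "{(a, b). a \<in> {1..int n} \<and> b \<in> {1..int n} \<and> identify c c' a = identify c c' b}
      = insert (c, c') (insert (c', c) ?diag)"
    using assms by (auto simp: identify_eq_iff)
  moreover have "card ?diag = n"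
    by (subst card_image) (auto simp: inj_on_def)
  moreover have "(c, c') \<notin> ?diag" "(c', c) \<notin> ?diag"
    using assms(3) by auto
  ultimately show ?thesis
    using assms(3) by simp
qed

lemma card_identified_grid_pairs:
  assumes "c \<in> {1..int n}" "c' \<in> {1..int n}" "c \<noteq> c'"
  shows "card {(x, y) \<in> grid_pts n d \<times> grid_pts n d. map (identify c c') x = map (identify c c') y}
    = (n + 2) ^ d"
proof -
  let ?R = "\<lambda>a b. a \<in> {1..int n} \<and> b \<in> {1..int n} \<and> identify c c' a = identify c c' b"
  have "{(x, y) \<in> grid_pts n d \<times> grid_pts n d. map (identify c c') x = map (identify c c') y}
      = {(xs, ys). length xs = d \<and> list_all2 ?R xs ys}"
  proof -
    have "(x \<in> grid_pts n d \<and> y \<in> grid_pts n d \<and> map (identify c c') x = map (identify c c') y)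
        \<longleftrightarrow> length x = d \<and> list_all2 ?R x y" for x y
      unfolding grid_pts_nth map_eq_map_iff_list_all2 list_all2_conv_all_nth by auto
    then show ?thesis by auto
  qed
  moreover have "finite {(a, b). ?R a b}"
    by (rule finite_subset[of _ "{1..int n} \<times> {1..int n}"]) auto
  ultimately show ?thesis
    using card_identify_pairs[OF assms] by (simp only: card_list_all2_length)
qed

lemma card_grid_pts_identify_singletons:
  assumes "c \<in> {1..int n}" "c' \<in> {1..int n}" "c \<noteq> c'"
  shows "(n - 2) ^ d \<le> card {x \<in> grid_pts n d. \<forall>y \<in> grid_pts n d. map (identify c c') y = map (identify c c') x \<longrightarrow> y = x}"
    (is "_ \<le> card ?S")
proof -
  let ?T = "{x. set x \<subseteq> {1..int n} - {c, c'} \<and> length x = d}"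
  have "card ({1..int n} - {c, c'}) = n - 2"
    using assms by (subst card_Diff_subset) auto
  then have "card ?T = (n - 2) ^ d"
    by (simp add: card_lists_length_eq)
  moreover have "x \<in> ?S" if x: "x \<in> ?T" for x
  proof -
    have x_fixed: "map (identify c c') x = x"
      by (rule map_idI) (use x in \<open>auto simp: identify_def\<close>)
    have "y = x" if "map (identify c c') y = map (identify c c') x" for y
    proof -
      have yx: "map (identify c c') y = x" using that x_fixed by simp
      have "map (identify c c') y = y"
      proof (rule map_idI)
        fix z assume "z \<in> set y"
        then have "identify c c' z \<in> set x" using yx by auto
        then show "identify c c' z = z" using x by (auto simp: identify_def)
      qed
      with yx show "y = x" by simp
    qed
    moreover have "x \<in> grid_pts n d"
      using x by (auto simp: grid_pts_eq)
    ultimately show ?thesis by blast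
  qed
  then have "card ?T \<le> card ?S"
    using finite_grid_pts by (intro card_mono) auto
  ultimately show ?thesis by simp
qed

lemma four_card_identified_pairs_le:
  assumes "c \<in> {1..int n}" "c' \<in> {1..int n}" "c \<noteq> c'" "a \<noteq> b"
  shows "4 * card {(x, y). x \<in> grid_pts n d \<and> y \<in> grid_pts n d
      \<and> map (identify c c') x = map (identify c c') y \<and> G x = a \<and> G y = b} + (n - 2) ^ d
    \<le> (n + 2) ^ d"
proof -
  have "{(x, y). x \<in> grid_pts n d \<and> y \<in> grid_pts n d
      \<and> map (identify c c') x = map (identify c c') y \<and> G x = a \<and> G y = b}
    = {(x, y) \<in> {x \<in> grid_pts n d. G x = a} \<times> {y \<in> grid_pts n d. G y = b}.
        map (identify c c') x = map (identify c c') y}"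
    by auto
  moreover have "4 * card {(x, y) \<in> {x \<in> grid_pts n d. G x = a} \<times> {y \<in> grid_pts n d. G y = b}.
          map (identify c c') x = map (identify c c') y}
      + card {x \<in> grid_pts n d. \<forall>y \<in> grid_pts n d. map (identify c c') y = map (identify c c') x \<longrightarrow> y = x}
    \<le> card {(x, y) \<in> grid_pts n d \<times> grid_pts n d. map (identify c c') x = map (identify c c') y}"
    using assms(4) by (intro four_card_fibre_pairs_le finite_grid_pts) auto
  ultimately show ?thesis
    using card_identified_grid_pairs[OF assms(1-3), of d] card_grid_pts_identify_singletons[OF assms(1-3), of d]
    by simp
qed

lemma length_shift [simp]: "length (shift p v t) = min (length p) (length v)"
  unfolding shift_def by simp

lemma nth_shift [simp]: "j < length p \<Longrightarrow> j < length v \<Longrightarrow> shift p v t ! j = p ! j + t * v ! j"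
  unfolding shift_def by simp

lemma shift_shift: "length p = length v \<Longrightarrow> shift (shift p v s) v t = shift p v (s + t)"
  by (rule nth_equalityI) (simp_all add: algebra_simps)

lemma shift_uminus: "shift p (map uminus v) t = shift p v (- t)"
  by (rule nth_equalityI) simp_all

lemma line_set_eq_image: "line_set n p v = (\<lambda>t. shift p v (int t)) ` {..n - 1}"
  unfolding line_set_def by auto

lemma line_set_reverse:
  assumes "length p = length v"
  shows "line_set n (shift p v (int (n - 1))) (map uminus v) = line_set n p v"
proof -
  have "shift (shift p v (int (n - 1))) (map uminus v) (int t) = shift p v (int (n - 1 - t))"
    if "t \<le> n - 1" for t
  proof -
    have "int (n - 1 - t) = int (n - 1) + - int t"
      using that by simp
    then show ?thesis
      using assms by (simp only: shift_uminus shift_shift)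
  qed
  then have "line_set n (shift p v (int (n - 1))) (map uminus v)
      = (\<lambda>t. shift p v (int t)) ` (\<lambda>t. n - 1 - t) ` {..n - 1}"
    unfolding line_set_eq_image image_image by (intro image_cong) auto
  also have "(\<lambda>t. n - 1 - t) ` {..n - 1} = {..n - 1}"
  proof (intro subset_antisym subsetI)
    fix t assume "t \<in> {..n - 1}"
    then have "t = n - 1 - (n - 1 - t)" "n - 1 - t \<in> {..n - 1}" by auto
    then show "t \<in> (\<lambda>t. n - 1 - t) ` {..n - 1}" by (rule image_eqI)
  qed auto
  finally show ?thesis
    by (simp add: line_set_eq_image)
qed

lemma line_pair_lengths: "line_pair n d p v \<Longrightarrow> length p = d \<and> length v = d"
  unfolding line_pair_def grid_pts_def is_dir_def by simp

lemma line_pair_coordinates: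
  assumes "line_pair n d p v" "1 \<le> n" "j < d"
  shows "v ! j \<in> {-1, 0, 1}" "p ! j \<in> {1..int n}" "p ! j + (int n - 1) * v ! j \<in> {1..int n}"
proof -
  have lengths: "length p = d" "length v = d"
    using assms(1) line_pair_lengths by auto
  have "shift p v (int (n - 1)) \<in> grid_pts n d" "p \<in> grid_pts n d" "is_dir d v"
    using assms(1) unfolding line_pair_def by auto
  then show "v ! j \<in> {-1, 0, 1}" "p ! j \<in> {1..int n}" "p ! j + (int n - 1) * v ! j \<in> {1..int n}"
    using assms(2,3) lengths by (auto simp: grid_pts_nth is_dir_def of_nat_diff)
qed

lemma identify_opposite_points:
  assumes "line_pair n d p v" "i < n"
  shows "map (identify (int i + 1) (int n - int i)) (shift p v (int i))
    = map (identify (int i + 1) (int n - int i)) (shift p v (int (n - 1 - i)))"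
proof (rule nth_equalityI)
  have lengths: "length p = d" "length v = d"
    using assms(1) line_pair_lengths by auto
  then show "length (map (identify (int i + 1) (int n - int i)) (shift p v (int i)))
    = length (map (identify (int i + 1) (int n - int i)) (shift p v (int (n - 1 - i))))"
    by simp
  fix j assume "j < length (map (identify (int i + 1) (int n - int i)) (shift p v (int i)))"
  then have j: "j < d" using lengths by simp
  note coords = line_pair_coordinates[OF assms(1) _ j]
  have "int (n - 1 - i) = int n - 1 - int i"
    using assms(2) by linarith
  then show "map (identify (int i + 1) (int n - int i)) (shift p v (int i)) ! j
    = map (identify (int i + 1) (int n - int i)) (shift p v (int (n - 1 - i))) ! j"
    using coords assms(2) j lengths by (auto simp: identify_def algebra_simps)
qed

(* The line whose points number i and n - 1 - i (counted from 0) are x and y; these differ by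
   n - 1 - 2 i times the direction. *)
definition line_through :: "nat \<Rightarrow> nat \<Rightarrow> int list \<Rightarrow> int list \<Rightarrow> int list set" where
  "line_through n i x y =
    (let v = map2 (\<lambda>a b. (b - a) div (int n - 1 - 2 * int i)) x y
     in line_set n (map2 (\<lambda>a b. a - int i * b) x v) v)"

lemma line_through_shift:
  assumes "length p = length v" "i < n" "2 * i \<noteq> n - 1"
  shows "line_through n i (shift p v (int i)) (shift p v (int (n - 1 - i))) = line_set n p v"
proof -
  define k where "k = int n - 1 - 2 * int i"
  have "k \<noteq> 0" "int (n - 1 - i) = int i + k"
    using assms(2,3) unfolding k_def by linarith+
  then have "map2 (\<lambda>a b. (b - a) div k) (shift p v (int i)) (shift p v (int (n - 1 - i))) = v"
    using assms(1) by (intro nth_equalityI) (simp_all add: algebra_simps)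
  moreover have "map2 (\<lambda>a b. a - int i * b) (shift p v (int i)) v = p"
    using assms(1) by (intro nth_equalityI) simp_all
  ultimately show ?thesis
    by (simp add: line_through_def k_def)
qed

lemma line_through_shift_swap:
  assumes "length p = length v" "i < n" "2 * i \<noteq> n - 1"
  shows "line_through n i (shift p v (int (n - 1 - i))) (shift p v (int i)) = line_set n p v"
proof -
  let ?p' = "shift p v (int (n - 1))" and ?v' = "map uminus v"
  have "int (n - 1 - i) = int (n - 1) + - int i" "int i = int (n - 1) + - int (n - 1 - i)"
    using assms(2) by linarith+
  then have "shift ?p' ?v' (int i) = shift p v (int (n - 1 - i))"
      "shift ?p' ?v' (int (n - 1 - i)) = shift p v (int i)"
    using assms(1) by (simp_all only: shift_uminus shift_shift)
  then have "line_through n i (shift p v (int (n - 1 - i))) (shift p v (int i))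
      = line_through n i (shift ?p' ?v' (int i)) (shift ?p' ?v' (int (n - 1 - i)))"
    by simp
  also have "\<dots> = line_set n ?p' ?v'"
    using assms by (intro line_through_shift) simp_all
  also have "\<dots> = line_set n p v"
    using assms(1) by (rule line_set_reverse)
  finally show ?thesis .
qed

lemma line_contains_eq_line_through:
  fixes w :: "'a list"
  assumes "i < length w" "w ! i \<noteq> w ! (length w - 1 - i)" "line_contains (length w) d G w L"
  shows "\<exists>x y. x \<in> grid_pts (length w) d \<and> y \<in> grid_pts (length w) d
    \<and> map (identify (int i + 1) (int (length w) - int i)) x = map (identify (int i + 1) (int (length w) - int i)) y
    \<and> G x = w ! i \<and> G y = w ! (length w - 1 - i) \<and> line_through (length w) i x y = L"
proof -
  let ?n = "length w"
  have i_mid: "2 * i \<noteq> ?n - 1"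
    using assms(2) by (metis mult_2 add_diff_cancel_left')
  obtain p v where line: "line_pair ?n d p v" "L = line_set ?n p v"
    and reads: "(\<forall>k<?n. G (shift p v (int k)) = w ! k) \<or> (\<forall>k<?n. G (shift p v (int (?n - 1 - k))) = w ! k)"
    using assms(3) unfolding line_contains_def by blast
  let ?x = "shift p v (int i)" and ?y = "shift p v (int (?n - 1 - i))"
  have lengths: "length p = length v"
    using line_pair_lengths[OF line(1)] by simp
  have on_line: "shift p v (int t) \<in> grid_pts ?n d" if "t \<le> ?n - 1" for t
    using line(1) that unfolding line_pair_def by blast
  have x_y: "?x \<in> grid_pts ?n d" "?y \<in> grid_pts ?n d"
    using on_line[of i] on_line[of "?n - 1 - i"] assms(1) by simp_all
  note identified = identify_opposite_points[OF line(1) assms(1)]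
  from reads show ?thesis
  proof
    assume forward: "\<forall>k<?n. G (shift p v (int k)) = w ! k"
    have "G ?x = w ! i" "G ?y = w ! (?n - 1 - i)"
      using forward[rule_format, of i] forward[rule_format, of "?n - 1 - i"] assms(1)
      by simp_all
    moreover have "line_through ?n i ?x ?y = L"
      using line_through_shift[OF lengths assms(1) i_mid] line(2) by simp
    ultimately show ?thesis
      using x_y identified by blast
  next
    assume backward: "\<forall>k<?n. G (shift p v (int (?n - 1 - k))) = w ! k"
    have "G ?y = w ! i" "G ?x = w ! (?n - 1 - i)"
      using backward[rule_format, of i] backward[rule_format, of "?n - 1 - i"] assms(1)
      by (simp_all add: Suc_diff_Suc)
    moreover have "line_through ?n i ?y ?x = L"
      using line_through_shift_swap[OF lengths assms(1) i_mid] line(2) by simp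
    ultimately show ?thesis
      using x_y identified by metis
  qed
qed

lemma f_grid_le_card_pairs:
  fixes w :: "'a list"
  assumes "i < length w" "w ! i \<noteq> w ! (length w - 1 - i)"
  shows "f_grid w d G \<le> card {(x, y). x \<in> grid_pts (length w) d \<and> y \<in> grid_pts (length w) d
    \<and> map (identify (int i + 1) (int (length w) - int i)) x = map (identify (int i + 1) (int (length w) - int i)) y
    \<and> G x = w ! i \<and> G y = w ! (length w - 1 - i)}"
    (is "_ \<le> card ?P")
proof -
  have "{L. is_line (length w) d L \<and> line_contains (length w) d G w L}
      \<subseteq> (\<lambda>(x, y). line_through (length w) i x y) ` ?P"
  proof
    fix L assume "L \<in> {L. is_line (length w) d L \<and> line_contains (length w) d G w L}"
    then obtain x y where "(x, y) \<in> ?P" "line_through (length w) i x y = L"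
      using line_contains_eq_line_through[OF assms] by blast
    then show "L \<in> (\<lambda>(x, y). line_through (length w) i x y) ` ?P"
      by force
  qed
  moreover have "finite ?P"
    by (rule finite_subset[of _ "grid_pts (length w) d \<times> grid_pts (length w) d"])
      (auto simp: finite_grid_pts)
  ultimately show ?thesis
    unfolding f_grid_def by (meson card_image_le card_mono finite_imageI le_trans)
qed

lemma f_max_le: "(\<And>G. f_grid w d G \<le> B) \<Longrightarrow> f_max w d \<le> B"
  unfolding f_max_def by (rule cSup_least) auto

theorem lemma17:
  fixes w :: "'a list" and d :: nat
  assumes "length w \<ge> 2"
    and "\<exists>i < length w. w ! i \<noteq> w ! (length w - 1 - i)"
    and "d \<ge> 1"
  shows "real (f_max w d) \<le> ((real (length w) + 2) ^ d - (real (length w) - 2) ^ d) / 4"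
proof -
  let ?n = "length w"
  obtain i where i: "i < ?n" "w ! i \<noteq> w ! (?n - 1 - i)"
    using assms(2) by blast
  then have "i \<noteq> ?n - 1 - i" by metis
  then have ends: "int i + 1 \<in> {1..int ?n}" "int ?n - int i \<in> {1..int ?n}" "int i + 1 \<noteq> int ?n - int i"
    using i(1) by auto
  have "f_grid w d G * 4 \<le> (?n + 2) ^ d - (?n - 2) ^ d" for G
    using f_grid_le_card_pairs[OF i, of d G] four_card_identified_pairs_le[OF ends i(2), of d G]
    by linarith
  then have "f_max w d * 4 \<le> (?n + 2) ^ d - (?n - 2) ^ d"
    using f_max_le[of w d "((?n + 2) ^ d - (?n - 2) ^ d) div 4"]
    by (simp add: less_eq_div_iff_mult_less_eq)
  then have "real (f_max w d * 4) \<le> real ((?n + 2) ^ d - (?n - 2) ^ d)"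
    by (rule of_nat_mono)
  also have "\<dots> = (real ?n + 2) ^ d - (real ?n - 2) ^ d"
    using assms(1) by (simp add: of_nat_diff power_mono add.commute)
  finally show ?thesis
    by simp
qed

end
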